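(* Let $A\subset\mathbb{R}^k$ be a nonempty convex set, $\epsilon>0$, and $f=f(A,\epsilon)=(f_1,\dots,f_k)^T$ the map defined in the context. For $x\in(A^\epsilon)^o\setminus\bar A$ let $\theta_i$ be the angle between $x-x_0$ and the $i$-th coordinate axis $e_i$, i.e. $\cos\theta_i=(x-x_0)\cdot e_i/|x-x_0|$. Then for every $i\in\{1,\dots,k\}$, $$\partial_i f_i(x)\ge\cos^2\theta_i\quad\text{for almost every }x\in(A^\epsilon)^o\setminus\bar A.$$
   Context: $|\cdot|$ is the Euclidean norm; $e_1,\dots,e_k$ the standard basis; $\partial_i$ the partial derivative in the $i$-th coordinate; $B^o$ denotes the interior of a set $B$. For a set $A$ and $\epsilon>0$, $A^\epsilon=\{x\in\mathbb{R}^k: d(x,A)\le\epsilon\}$ where $d(x,A)=\inf_{y\in A}|x-y|$; $\bar A$ is the closure of $A$. For $x\in\mathbb{R}^k$ let $x_0$ denote the nearest point to $x$ in $\bar A$. The map $f=f(A,\epsilon)$ is defined by: $f(x)=0$ if $x\in\bar A$; $f(x)=x-x_0$ if $x\in A^\epsilon\setminus\bar A$; and if $x\in\mathbb{R}^k\setminus A^\epsilon$, $f(x)=x_1-x_0$ where $x_1$ is the intersection of the segment $\{x_0+t(x-x_0):t\in[0,1]\}$ with the boundary $\partial A^\epsilon$ of $A^\epsilon$. *)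

theory Defs
  imports "HOL-Analysis.Analysis"
begin

definition nbhd :: "'a::euclidean_space set \<Rightarrow> real \<Rightarrow> 'a set" where
  "nbhd A eps = {x. infdist x A \<le> eps}"

definition nearest :: "'a::euclidean_space set \<Rightarrow> 'a \<Rightarrow> 'a" where
  "nearest A x = closest_point (closure A) x"

definition fmap :: "'a::euclidean_space set \<Rightarrow> real \<Rightarrow> 'a \<Rightarrow> 'a" where
  "fmap A eps x =
     (if x \<in> closure A then 0
      else if x \<in> nbhd A eps then x - nearest A x
      else (SOME x1. x1 \<in> closed_segment (nearest A x) x \<and> x1 \<in> frontier (nbhd A eps))
             - nearest A x)"

end

theory Submission
  imports Defs
begin

text \<open>The nearest-point map \<open>p\<close> onto the closed convex set \<open>closure A\<close> is monotone and
  1-Lipschitz, so along each coordinate line \<open>t \<mapsto> p (x + t e\<^sub>i) \<bullet> e\<^sub>i\<close> has difference quotients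
  in \<open>[0,1]\<close>. Such a function is an indefinite integral (its Stieltjes measure is dominated by
  Lebesgue measure), hence differentiable almost everywhere, and by Fubini the partial derivative
  \<open>\<partial>\<^sub>i p\<^sub>i\<close> exists almost everywhere. Off \<open>closure A\<close> and inside \<open>A\<^sup>\<epsilon>\<close> we have \<open>f = id - p\<close>,
  so \<open>\<partial>\<^sub>i f\<^sub>i = 1 - \<partial>\<^sub>i p\<^sub>i\<close>. Comparing the variational inequalities at \<open>x\<close> and \<open>x + t e\<^sub>i\<close>
  shows that the increment \<open>p (x + t e\<^sub>i) - p x\<close> has a normal component of order \<open>t\<^sup>2\<close> and
  length at most \<open>t \<surd>q\<close>, where \<open>q\<close> is the difference quotient; since \<open>e\<^sub>i\<close> has tangential part of
  length \<open>sin \<theta>\<^sub>i\<close>, in the limit \<open>\<partial>\<^sub>i p\<^sub>i \<le> sin\<^sup>2 \<theta>\<^sub>i\<close>, i.e. \<open>\<partial>\<^sub>i f\<^sub>i \<ge> cos\<^sup>2 \<theta>\<^sub>i\<close>.\<close>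

definition measure_add :: "'a measure \<Rightarrow> 'a measure \<Rightarrow> 'a measure" where
  "measure_add M N = measure_of (space M) (sets M) (\<lambda>A. emeasure M A + emeasure N A)"

lemma sets_measure_add [simp]: "sets (measure_add M N) = sets M"
  unfolding measure_add_def by (simp add: sets.sets_measure_of_eq)

lemma emeasure_measure_add:
  assumes "sets N = sets M" and "A \<in> sets M"
  shows "emeasure (measure_add M N) A = emeasure M A + emeasure N A"
  unfolding measure_add_def
proof (rule emeasure_measure_of_sigma[OF sets.sigma_algebra_axioms _ _ assms(2)])
  show "positive (sets M) (\<lambda>A. emeasure M A + emeasure N A)"
    by (simp add: positive_def)
  show "countably_additive (sets M) (\<lambda>A. emeasure M A + emeasure N A)"
  proof (rule countably_additiveI)
    fix A :: "nat \<Rightarrow> 'a set"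
    assume "range A \<subseteq> sets M" "disjoint_family A"
    then show "(\<Sum>i. emeasure M (A i) + emeasure N (A i))
        = emeasure M (\<Union>i. A i) + emeasure N (\<Union>i. A i)"
      using assms(1) by (simp add: suminf_add[symmetric] suminf_emeasure)
  qed
qed

text \<open>The hypotheses \<open>mono g\<close> and \<open>mono (\<lambda>t. t - g t)\<close> used below say that all difference
  quotients of \<open>g\<close> lie in \<open>[0,1]\<close>.\<close>

lemma lipschitz_if_mono_and_mono_diff:
  fixes g :: "real \<Rightarrow> real"
  assumes "mono g" and "mono (\<lambda>t. t - g t)"
  shows "1-lipschitz_on S g"
proof (rule lipschitz_onI)
  show "dist (g s) (g t) \<le> 1 * dist s t" for s t
    using assms[THEN monoD, of s t] assms[THEN monoD, of t s]
    by (cases "s \<le> t") (auto simp: dist_real_def)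
qed simp

lemma emeasure_interval_measure_Ioo:
  fixes g :: "real \<Rightarrow> real"
  assumes "mono g" and "continuous_on UNIV g" and "l \<le> u"
  shows "emeasure (interval_measure g) {l<..<u} = g u - g l"
proof -
  have "{l<..<u} = {l<..u} - {u}"
    using assms(3) by auto
  moreover have "emeasure (interval_measure g) {u} = 0"
    using emeasure_interval_measure_Icc[of u u g] assms(1,2) by (simp add: monoD)
  ultimately show ?thesis
    using emeasure_interval_measure_Ioc[of l u g] assms
    by (simp add: emeasure_Diff_null_set null_setsI monoD continuous_on_imp_continuous_within)
qed

lemma lborel_eq_measure_add_interval_measure:
  fixes g :: "real \<Rightarrow> real"
  assumes mono: "mono g" and mono_diff: "mono (\<lambda>t. t - g t)"
  shows "lborel = measure_add (interval_measure g) (interval_measure (\<lambda>t. t - g t))"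
proof (rule lborel_eqI)
  fix l u :: real
  assume "\<And>b. b \<in> Basis \<Longrightarrow> l \<bullet> b \<le> u \<bullet> b"
  then have "l \<le> u"
    by simp
  moreover have "continuous_on UNIV g" "continuous_on UNIV (\<lambda>t. t - g t)"
    using lipschitz_on_continuous_on[OF lipschitz_if_mono_and_mono_diff[OF assms]]
    by (auto intro!: continuous_intros)
  ultimately show "emeasure (measure_add (interval_measure g) (interval_measure (\<lambda>t. t - g t)))
      (box l u) = (\<Prod>b\<in>Basis. (u - l) \<bullet> b)"
    using emeasure_interval_measure_Ioo[OF mono] emeasure_interval_measure_Ioo[OF mono_diff]
      mono[THEN monoD, of l u] mono_diff[THEN monoD, of l u]
    by (simp add: emeasure_measure_add ennreal_plus[symmetric] del: ennreal_plus)
qed simp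

lemma absolutely_continuous_interval_measure:
  fixes g :: "real \<Rightarrow> real"
  assumes "mono g" and "mono (\<lambda>t. t - g t)"
  shows "absolutely_continuous lborel (interval_measure g)"
  unfolding absolutely_continuous_def
proof
  fix N :: "real set"
  assume N: "N \<in> null_sets lborel"
  then have N_borel: "N \<in> sets borel"
    by auto
  then have "emeasure (interval_measure g) N
      \<le> emeasure (measure_add (interval_measure g) (interval_measure (\<lambda>t. t - g t))) N"
    by (simp add: emeasure_measure_add)
  also have "\<dots> = 0"
    using N by (simp add: null_setsD1 flip: lborel_eq_measure_add_interval_measure[OF assms])
  finally show "N \<in> null_sets (interval_measure g)"
    using N_borel by (auto intro: null_setsI)
qed

lemma integral_representation_if_mono_and_mono_diff:
  fixes g :: "real \<Rightarrow> real"
  assumes mono: "mono g" and "mono (\<lambda>t. t - g t)"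
  obtains f where "\<And>a b. a \<le> b \<Longrightarrow> (f has_integral (g b - g a)) {a..b}"
proof -
  have cont: "continuous_on UNIV g"
    using lipschitz_on_continuous_on[OF lipschitz_if_mono_and_mono_diff[OF assms]] .
  obtain \<rho> where \<rho>: "\<rho> \<in> borel_measurable lborel" "density lborel \<rho> = interval_measure g"
    using sigma_finite_measure.Radon_Nikodym[OF sigma_finite_lborel
        absolutely_continuous_interval_measure[OF assms]] by auto
  define f where "f x = enn2real (\<rho> x)" for x
  have "(f has_integral (g b - g a)) {a..b}" if ab: "a \<le> b" for a b
  proof -
    have I: "(\<integral>\<^sup>+ x. \<rho> x * indicator {a..b} x \<partial>lborel) = ennreal (g b - g a)"
      using \<rho> emeasure_interval_measure_Icc[OF ab _ cont] mono[THEN monoD]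
      by (simp flip: emeasure_density)
    then have "AE x in lborel. \<rho> x * indicator {a..b} x \<noteq> \<infinity>"
      using \<rho>(1) by (intro nn_integral_noteq_infinite) auto
    then have "(\<integral>\<^sup>+ x. ennreal (f x * indicator {a..b} x) \<partial>lborel) = ennreal (g b - g a)"
      unfolding I[symmetric] by (intro nn_integral_cong_AE) (auto simp: f_def indicator_def less_top)
    then have "((\<lambda>x. f x * indicator {a..b} x) has_integral (g b - g a)) UNIV"
      using \<rho>(1) mono[THEN monoD, OF ab] by (intro nn_integral_has_integral) (auto simp: f_def)
    then show ?thesis
      unfolding indicator_times_eq_if has_integral_restrict_UNIV .
  qed
  then show ?thesis
    using that by blast
qed

lemma indefinite_integral_right_quotient_ae:
  fixes f g :: "real \<Rightarrow> real"
  assumes "\<And>a b. a \<le> b \<Longrightarrow> (f has_integral (g b - g a)) {a..b}"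
  obtains N where "negligible N"
    and "\<And>x. x \<notin> N \<Longrightarrow> ((\<lambda>h. (g (x + h) - g x) / h) \<longlongrightarrow> f x) (at_right 0)"
proof -
  have "f integrable_on cbox a b" for a b
    using assms[of a b] by (cases "a \<le> b") (auto simp: integrable_on_def)
  then obtain N where "negligible N" and N: "\<And>x e. \<lbrakk>x \<notin> N; 0 < e\<rbrakk> \<Longrightarrow>
      \<exists>d>0. \<forall>h. 0 < h \<and> h < d \<longrightarrow> norm (integral (cbox x (x + h *\<^sub>R One)) f /\<^sub>R h ^ DIM(real) - f x) < e"
    using integrable_ccontinuous_explicit by metis
  have average: "integral (cbox x (x + h *\<^sub>R One)) f /\<^sub>R h ^ DIM(real) = (g (x + h) - g x) / h"
    if "h > 0" for x h
    using assms[of x "x + h"] that by (simp add: integral_unique divide_inverse_commute)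
  show ?thesis
  proof (rule that[OF \<open>negligible N\<close>])
    fix x assume "x \<notin> N"
    show "((\<lambda>h. (g (x + h) - g x) / h) \<longlongrightarrow> f x) (at_right 0)"
    proof (rule tendstoI)
      fix e :: real assume "e > 0"
      with N[OF \<open>x \<notin> N\<close>] obtain d where "d > 0" and d: "\<forall>h. 0 < h \<and> h < d \<longrightarrow>
          norm (integral (cbox x (x + h *\<^sub>R One)) f /\<^sub>R h ^ DIM(real) - f x) < e"
        by blast
      then show "\<forall>\<^sub>F h in at_right 0. dist ((g (x + h) - g x) / h) (f x) < e"
        unfolding eventually_at_right_field by (metis average d dist_norm)
    qed
  qed
qed

lemma indefinite_integral_has_real_derivative_ae:
  fixes f g :: "real \<Rightarrow> real"
  assumes integral: "\<And>a b. a \<le> b \<Longrightarrow> (f has_integral (g b - g a)) {a..b}"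
  obtains N where "negligible N" and "\<And>x. x \<notin> N \<Longrightarrow> (g has_real_derivative f x) (at x)"
proof -
  obtain N1 where "negligible N1"
    and right: "\<And>x. x \<notin> N1 \<Longrightarrow> ((\<lambda>h. (g (x + h) - g x) / h) \<longlongrightarrow> f x) (at_right 0)"
    using indefinite_integral_right_quotient_ae[OF integral] by blast
  have "((\<lambda>x. f (- x)) has_integral (- g (- b) - - g (- a))) {a..b}" if "a \<le> b" for a b
    using integral[of "- b" "- a"] that has_integral_reflect_real[of f _ "- a" "- b"] by simp
  then obtain N2 where "negligible N2"
    and reflected: "\<And>x. x \<notin> N2 \<Longrightarrow> ((\<lambda>h. (- g (- (x + h)) - - g (- x)) / h) \<longlongrightarrow> f (- x)) (at_right 0)"
    using indefinite_integral_right_quotient_ae[of "\<lambda>x. f (- x)" "\<lambda>x. - g (- x)"] by blast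
  show ?thesis
  proof (rule that[of "N1 \<union> uminus ` N2"])
    have "negligible (uminus ` N2)"
      by (rule negligible_differentiable_image_negligible[OF order_refl \<open>negligible N2\<close>])
         (auto intro!: derivative_intros simp: differentiable_on_def differentiable_def)
    then show "negligible (N1 \<union> uminus ` N2)"
      using \<open>negligible N1\<close> by simp
    fix x assume x: "x \<notin> N1 \<union> uminus ` N2"
    then have "- x \<notin> N2"
      by (metis UnI2 image_eqI minus_minus)
    moreover have "(\<lambda>h. (- g (- (- x + h)) - - g (- (- x))) / h) = (\<lambda>h. (g (x + - h) - g x) / - h)"
      by (simp add: fun_eq_iff minus_divide_left)
    ultimately have "((\<lambda>h. (g (x + h) - g x) / h) \<longlongrightarrow> f x) (at_left 0)"
      using reflected[of "- x"] unfolding filterlim_at_left_to_right by simp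
    moreover have "((\<lambda>h. (g (x + h) - g x) / h) \<longlongrightarrow> f x) (at_right 0)"
      using right x by blast
    ultimately show "(g has_real_derivative f x) (at x)"
      unfolding DERIV_def by (rule filterlim_split_at)
  qed
qed

lemma differentiable_ae_if_mono_and_mono_diff:
  fixes g :: "real \<Rightarrow> real"
  assumes "mono g" and "mono (\<lambda>t. t - g t)"
  obtains N where "negligible N" and "\<And>x. x \<notin> N \<Longrightarrow> \<exists>D. (g has_real_derivative D) (at x)"
  using integral_representation_if_mono_and_mono_diff[OF assms] indefinite_integral_has_real_derivative_ae
  by metis

lemma le_on_open_if_le_on_Rats:
  fixes \<phi> :: "real \<Rightarrow> real"
  assumes "open U" and "continuous_on U \<phi>" and "\<And>x. x \<in> U \<Longrightarrow> x \<in> \<rat> \<Longrightarrow> \<phi> x \<le> e"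
    and "x \<in> U"
  shows "\<phi> x \<le> e"
proof -
  have "open (U \<inter> \<phi> -` {e<..})"
    using continuous_open_preimage[OF assms(2,1)] by simp
  moreover have "U \<inter> \<phi> -` {e<..} \<inter> \<rat> = {}"
    using assms(3) by force
  ultimately have "U \<inter> \<phi> -` {e<..} \<inter> closure \<rat> = {}"
    by (simp add: open_Int_closure_eq_empty)
  then show ?thesis
    using \<open>x \<in> U\<close> by (auto simp: Rats_closure_real)
qed

text \<open>A Cauchy criterion for limits at \<open>0\<close> that quantifies over countably many points only, so
  that the set of points where it fails along a family of continuous functions is Borel.\<close>

definition rat_Cauchy_at_0 :: "(real \<Rightarrow> real) \<Rightarrow> bool" where
  "rat_Cauchy_at_0 \<phi> \<longleftrightarrow> (\<forall>n::nat. \<exists>m::nat. \<forall>s t :: rat.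
      s \<noteq> 0 \<and> t \<noteq> 0 \<and> \<bar>of_rat s\<bar> < inverse (Suc m) \<and> \<bar>of_rat t\<bar> < inverse (Suc m) \<longrightarrow>
      \<bar>\<phi> (of_rat s) - \<phi> (of_rat t)\<bar> \<le> inverse (Suc n))"

lemma rat_Cauchy_at_0_if_tendsto:
  fixes \<phi> :: "real \<Rightarrow> real"
  assumes "(\<phi> \<longlongrightarrow> L) (at 0)"
  shows "rat_Cauchy_at_0 \<phi>"
  unfolding rat_Cauchy_at_0_def
proof
  fix n :: nat
  have "\<forall>\<^sub>F s in at 0. dist (\<phi> s) L < inverse (Suc n) / 2"
    using assms by (rule tendstoD) simp
  then obtain d where "d > 0" and d: "\<And>s. s \<noteq> 0 \<Longrightarrow> \<bar>s\<bar> < d \<Longrightarrow> \<bar>\<phi> s - L\<bar> < inverse (Suc n) / 2"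
    by (auto simp: eventually_at dist_real_def)
  obtain m :: nat where "inverse (Suc m) < d"
    using reals_Archimedean[OF \<open>d > 0\<close>] by blast
  then have close: "\<bar>\<phi> s - L\<bar> < inverse (Suc n) / 2" if "s \<noteq> 0" "\<bar>s\<bar> < inverse (Suc m)" for s
    using d that by (meson less_trans)
  then show "\<exists>m::nat. \<forall>s t :: rat.
      s \<noteq> 0 \<and> t \<noteq> 0 \<and> \<bar>of_rat s\<bar> < inverse (Suc m) \<and> \<bar>of_rat t\<bar> < inverse (Suc m) \<longrightarrow>
      \<bar>\<phi> (of_rat s) - \<phi> (of_rat t)\<bar> \<le> inverse (Suc n)"
  proof (intro exI[of _ m] allI impI)
    fix s t :: rat
    assume "s \<noteq> 0 \<and> t \<noteq> 0 \<and> \<bar>of_rat s\<bar> < inverse (Suc m) \<and> \<bar>of_rat t\<bar> < inverse (Suc m)"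
    then have "\<bar>\<phi> (of_rat s) - L\<bar> < inverse (Suc n) / 2" "\<bar>\<phi> (of_rat t) - L\<bar> < inverse (Suc n) / 2"
      using close[of "of_rat s"] close[of "of_rat t"] by simp_all
    then show "\<bar>\<phi> (of_rat s) - \<phi> (of_rat t)\<bar> \<le> inverse (Suc n)"
      by linarith
  qed
qed

lemma tendsto_if_rat_Cauchy_at_0:
  fixes \<phi> :: "real \<Rightarrow> real"
  assumes cont: "continuous_on (- {0}) \<phi>" and "rat_Cauchy_at_0 \<phi>"
  obtains L where "(\<phi> \<longlongrightarrow> L) (at 0)"
proof -
  define U where "U m = {s::real. s \<noteq> 0 \<and> \<bar>s\<bar> < inverse (Suc m)}" for m :: nat
  have U_open: "open (U m)" for m
    unfolding U_def by (intro open_Collect_conj open_Collect_neq open_Collect_less continuous_intros)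
  have U_cont: "continuous_on (U m) \<phi>" for m
    using cont by (rule continuous_on_subset) (auto simp: U_def)
  have real_Cauchy: "\<exists>m. \<forall>s\<in>U m. \<forall>t\<in>U m. \<bar>\<phi> s - \<phi> t\<bar> \<le> inverse (Suc n)" for n
  proof -
    obtain m where m: "\<And>s t :: rat. s \<noteq> 0 \<Longrightarrow> t \<noteq> 0 \<Longrightarrow> \<bar>of_rat s\<bar> < inverse (Suc m) \<Longrightarrow>
        \<bar>of_rat t\<bar> < inverse (Suc m) \<Longrightarrow> \<bar>\<phi> (of_rat s) - \<phi> (of_rat t)\<bar> \<le> inverse (Suc n)"
      using \<open>rat_Cauchy_at_0 \<phi>\<close> unfolding rat_Cauchy_at_0_def by blast
    have rat_t: "\<bar>\<phi> s - \<phi> t\<bar> \<le> inverse (Suc n)" if st: "s \<in> U m" "t \<in> U m" "t \<in> \<rat>" for s t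
    proof (rule le_on_open_if_le_on_Rats[OF U_open _ _ st(1)])
      show "continuous_on (U m) (\<lambda>s. \<bar>\<phi> s - \<phi> t\<bar>)"
        by (intro continuous_intros U_cont)
      show "\<bar>\<phi> x - \<phi> t\<bar> \<le> inverse (Suc n)" if "x \<in> U m" "x \<in> \<rat>" for x
        using that st(2,3) m by (auto simp: U_def elim!: Rats_cases)
    qed
    have "\<bar>\<phi> s - \<phi> t\<bar> \<le> inverse (Suc n)" if st: "s \<in> U m" "t \<in> U m" for s t
    proof (rule le_on_open_if_le_on_Rats[OF U_open _ _ st(2)])
      show "continuous_on (U m) (\<lambda>t. \<bar>\<phi> s - \<phi> t\<bar>)"
        by (intro continuous_intros U_cont)
    qed (use st rat_t in blast)
    then show ?thesis
      by blast
  qed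
  have "cauchy_filter (filtermap \<phi> (at 0))"
    unfolding cauchy_filter_metric_filtermap
  proof (intro allI impI)
    fix e :: real
    assume "e > 0"
    then obtain n :: nat where "inverse (Suc n) < e"
      using reals_Archimedean by blast
    moreover obtain m where "\<forall>s\<in>U m. \<forall>t\<in>U m. \<bar>\<phi> s - \<phi> t\<bar> \<le> inverse (Suc n)"
      using real_Cauchy by blast
    moreover have "\<forall>\<^sub>F s in at 0. s \<in> U m"
      unfolding eventually_at U_def by (auto simp: dist_real_def intro!: exI[of _ "inverse (Suc m)"])
    ultimately show "\<exists>P. eventually P (at 0) \<and> (\<forall>s t. P s \<and> P t \<longrightarrow> dist (\<phi> s) (\<phi> t) < e)"
      by (intro exI[of _ "\<lambda>s. s \<in> U m"]) (force simp: dist_real_def)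
  qed
  then obtain L where "filtermap \<phi> (at 0) \<le> nhds L"
    using cauchy_filter_complete_converges[OF _ complete_UNIV, of "filtermap \<phi> (at 0)"]
    by (auto simp: filtermap_bot_iff)
  then show ?thesis
    using that unfolding filterlim_def by blast
qed

lemma differentiable_at_0_iff_rat_Cauchy_at_0:
  fixes h :: "real \<Rightarrow> real"
  assumes "continuous_on UNIV h"
  shows "(\<exists>D. (h has_real_derivative D) (at 0)) \<longleftrightarrow> rat_Cauchy_at_0 (\<lambda>s. (h s - h 0) / s)"
proof -
  have cont: "continuous_on (- {0}) (\<lambda>s. (h s - h 0) / s)"
    using assms by (intro continuous_intros) (auto intro: continuous_on_subset)
  show ?thesis
    unfolding DERIV_def add_0
  proof
    assume "\<exists>D. ((\<lambda>s. (h s - h 0) / s) \<longlongrightarrow> D) (at 0)"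
    then show "rat_Cauchy_at_0 (\<lambda>s. (h s - h 0) / s)"
      using rat_Cauchy_at_0_if_tendsto by blast
  next
    assume "rat_Cauchy_at_0 (\<lambda>s. (h s - h 0) / s)"
    then show "\<exists>D. ((\<lambda>s. (h s - h 0) / s) \<longlongrightarrow> D) (at 0)"
      using tendsto_if_rat_Cauchy_at_0[OF cont] by blast
  qed
qed

lemma negligible_if_negligible_lines:
  fixes E :: "'a::euclidean_space set" and i :: 'a
  assumes i: "i \<in> Basis" and E [measurable]: "E \<in> sets borel"
    and lines: "\<And>x. negligible {s::real. x + s *\<^sub>R i \<in> E}"
  shows "negligible E"
proof -
  interpret P: product_sigma_finite "\<lambda>_::'a. (lborel :: real measure)"
    by standard
  define T where "T = (\<lambda>f::'a \<Rightarrow> real. \<Sum>b\<in>Basis. f b *\<^sub>R b)"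
  have T: "T \<in> measurable (\<Pi>\<^sub>M b\<in>Basis. (lborel::real measure)) borel"
    unfolding T_def by measurable
  have Basis: "Basis = insert i (Basis - {i})"
    using i by auto
  have "emeasure lborel E = (\<integral>\<^sup>+ f. indicator E (T f) \<partial>(\<Pi>\<^sub>M b\<in>Basis. (lborel::real measure)))"
    unfolding lborel_eq[where 'a='a] T_def[symmetric]
    by (simp add: nn_integral_distr[OF T] flip: nn_integral_indicator)
  also have "\<dots> = (\<integral>\<^sup>+ x. (\<integral>\<^sup>+ s. indicator E (T (x(i := s))) \<partial>lborel)
      \<partial>(\<Pi>\<^sub>M b\<in>Basis-{i}. (lborel::real measure)))"
    by (subst Basis, rule P.product_nn_integral_insert) (use T Basis in auto)
  also have "\<dots> = (\<integral>\<^sup>+ x. 0 \<partial>(\<Pi>\<^sub>M b\<in>Basis-{i}. (lborel::real measure)))"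
  proof (rule nn_integral_cong)
    fix x :: "'a \<Rightarrow> real"
    define c where "c = (\<Sum>b\<in>Basis-{i}. x b *\<^sub>R b)"
    have "T (x(i := s)) = c + s *\<^sub>R i" for s
      unfolding T_def c_def by (subst Basis) (auto simp: sum.insert_remove intro!: sum.cong)
    then have "(\<integral>\<^sup>+ s. indicator E (T (x(i := s))) \<partial>lborel) = emeasure lborel {s. c + s *\<^sub>R i \<in> E}"
      by (simp add: indicator_def flip: nn_integral_indicator)
    moreover have "{s. c + s *\<^sub>R i \<in> E} \<in> sets borel"
      by measurable
    ultimately show "(\<integral>\<^sup>+ s. indicator E (T (x(i := s))) \<partial>lborel) = 0"
      using lines[of c] by (simp add: negligible_iff_null_sets null_sets_completion_iff null_setsD1)
  qed
  finally show ?thesis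
    by (simp add: negligible_iff_null_sets null_sets_completion_iff null_setsI)
qed

lemma AE_differentiable_along_Basis:
  fixes G :: "'a::euclidean_space \<Rightarrow> real" and i :: 'a
  assumes cont: "continuous_on UNIV G" and i: "i \<in> Basis"
    and lines: "\<And>x. \<exists>N. negligible N \<and>
      (\<forall>s. s \<notin> N \<longrightarrow> (\<exists>D. ((\<lambda>s. G (x + s *\<^sub>R i)) has_real_derivative D) (at s)))"
  shows "AE y in lebesgue. \<exists>D. ((\<lambda>s. G (y + s *\<^sub>R i)) has_real_derivative D) (at 0)"
proof -
  define B where "B = {y. \<not> rat_Cauchy_at_0 (\<lambda>s. (G (y + s *\<^sub>R i) - G y) / s)}"
  have "continuous_on UNIV (\<lambda>s. G (y + s *\<^sub>R i))" for y
    by (rule continuous_on_compose2[OF cont]) (auto intro!: continuous_intros)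
  then have differentiable_iff:
      "(\<exists>D. ((\<lambda>s. G (y + s *\<^sub>R i)) has_real_derivative D) (at 0)) \<longleftrightarrow> y \<notin> B" for y
    using differentiable_at_0_iff_rat_Cauchy_at_0 by (simp add: B_def)
  have [measurable]: "G \<in> borel_measurable borel"
    using cont by (rule borel_measurable_continuous_onI)
  have "B \<in> sets borel"
    unfolding B_def rat_Cauchy_at_0_def by measurable
  moreover have "negligible {s. x + s *\<^sub>R i \<in> B}" for x
  proof -
    obtain N where "negligible N"
      and N: "\<And>s. s \<notin> N \<Longrightarrow> \<exists>D. ((\<lambda>s. G (x + s *\<^sub>R i)) has_real_derivative D) (at s)"
      using lines by blast
    have "{s. x + s *\<^sub>R i \<in> B} \<subseteq> N"
    proof (rule subsetI, rule ccontr)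
      fix s
      assume "s \<in> {s. x + s *\<^sub>R i \<in> B}" and "s \<notin> N"
      then obtain D where "((\<lambda>t. G (x + t *\<^sub>R i)) has_real_derivative D) (at (0 + s))"
        using N by auto
      then have "((\<lambda>t. G (x + (t + s) *\<^sub>R i)) has_real_derivative D) (at 0)"
        by (simp only: DERIV_shift)
      then have "((\<lambda>t. G ((x + s *\<^sub>R i) + t *\<^sub>R i)) has_real_derivative D) (at 0)"
        by (simp add: scaleR_add_left add_ac)
      with \<open>s \<in> {s. x + s *\<^sub>R i \<in> B}\<close> show False
        using differentiable_iff by blast
    qed
    with \<open>negligible N\<close> show ?thesis
      by (rule negligible_subset)
  qed
  ultimately have "negligible B"
    by (rule negligible_if_negligible_lines[OF i])
  then show ?thesis
    unfolding negligible_iff_null_sets differentiable_iff by (rule AE_not_in)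
qed

lemma closest_point_increment_bounds:
  fixes S :: "'a::euclidean_space set" and x h :: 'a
  assumes "convex S" and "closed S" and "S \<noteq> {}"
  defines "\<Delta> \<equiv> closest_point S (x + h) - closest_point S x"
  shows "\<bar>(x - closest_point S x) \<bullet> \<Delta>\<bar> \<le> h \<bullet> \<Delta>" and "(norm \<Delta>)\<^sup>2 \<le> h \<bullet> \<Delta>"
proof -
  have normal: "(x - closest_point S x) \<bullet> \<Delta> \<le> 0"
    using closest_point_dot[OF assms(1,2) closest_point_in_set[OF assms(2,3)]] by (simp add: \<Delta>_def)
  have "(x + h - closest_point S (x + h)) \<bullet> (closest_point S x - closest_point S (x + h)) \<le> 0"
    using closest_point_dot[OF assms(1,2) closest_point_in_set[OF assms(2,3)]] .
  then have "(norm \<Delta>)\<^sup>2 \<le> h \<bullet> \<Delta> + (x - closest_point S x) \<bullet> \<Delta>"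
    by (simp add: \<Delta>_def power2_norm_eq_inner inner_diff_left inner_diff_right inner_add_left
        inner_add_right inner_commute algebra_simps)
  with normal zero_le_power2[of "norm \<Delta>"]
  show "\<bar>(x - closest_point S x) \<bullet> \<Delta>\<bar> \<le> h \<bullet> \<Delta>" and "(norm \<Delta>)\<^sup>2 \<le> h \<bullet> \<Delta>"
    by linarith+
qed

lemma mono_closest_point_along:
  fixes S :: "'a::euclidean_space set"
  assumes "convex S" and "closed S" and "S \<noteq> {}"
  shows "mono (\<lambda>s. closest_point S (y + s *\<^sub>R u) \<bullet> u)"
proof (rule monoI)
  fix s t :: real
  assume "s \<le> t"
  have "y + t *\<^sub>R u = (y + s *\<^sub>R u) + (t - s) *\<^sub>R u"
    by (simp add: algebra_simps)
  then have "0 \<le> (t - s) * (u \<bullet> (closest_point S (y + t *\<^sub>R u) - closest_point S (y + s *\<^sub>R u)))"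
    using closest_point_increment_bounds(2)[OF assms, of "y + s *\<^sub>R u" "(t - s) *\<^sub>R u"]
    by (metis inner_scaleR_left order_trans zero_le_power2)
  then show "closest_point S (y + s *\<^sub>R u) \<bullet> u \<le> closest_point S (y + t *\<^sub>R u) \<bullet> u"
    using \<open>s \<le> t\<close> by (cases "s = t") (auto simp: zero_le_mult_iff inner_diff_right inner_commute)
qed

lemma mono_diff_closest_point_along:
  fixes S :: "'a::euclidean_space set"
  assumes "convex S" and "closed S" and "S \<noteq> {}" and "norm u = 1"
  shows "mono (\<lambda>s. s - closest_point S (y + s *\<^sub>R u) \<bullet> u)"
proof (rule monoI)
  fix s t :: real
  assume "s \<le> t"
  have "(closest_point S (y + t *\<^sub>R u) - closest_point S (y + s *\<^sub>R u)) \<bullet> u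
      \<le> norm (closest_point S (y + t *\<^sub>R u) - closest_point S (y + s *\<^sub>R u))"
    using norm_cauchy_schwarz[of _ u] assms(4) by simp
  also have "\<dots> \<le> norm ((y + t *\<^sub>R u) - (y + s *\<^sub>R u))"
    using closest_point_lipschitz[OF assms(1-3), of "y + t *\<^sub>R u" "y + s *\<^sub>R u"] by (simp add: dist_norm)
  also have "\<dots> = t - s"
    using \<open>s \<le> t\<close> assms(4) by (simp flip: scaleR_diff_left)
  finally show "s - closest_point S (y + s *\<^sub>R u) \<bullet> u \<le> t - closest_point S (y + t *\<^sub>R u) \<bullet> u"
    by (simp add: inner_diff_left)
qed

lemma power2_norm_diff_projection:
  fixes u n :: "'a::real_inner"
  assumes "norm n = 1"
  shows "(norm (u - (u \<bullet> n) *\<^sub>R n))\<^sup>2 = (norm u)\<^sup>2 - (u \<bullet> n)\<^sup>2"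
proof -
  have "n \<bullet> n = 1"
    using assms by (simp add: norm_eq_1)
  have "(norm (u - (u \<bullet> n) *\<^sub>R n))\<^sup>2 = (u - (u \<bullet> n) *\<^sub>R n) \<bullet> (u - (u \<bullet> n) *\<^sub>R n)"
    by (simp add: power2_norm_eq_inner)
  also have "\<dots> = u \<bullet> u - (u \<bullet> n)\<^sup>2"
    using \<open>n \<bullet> n = 1\<close> by (simp add: inner_diff_left inner_diff_right inner_commute[of n u] power2_eq_square)
  finally show ?thesis
    by (simp add: power2_norm_eq_inner)
qed

lemma le_power2_if_le_sqrt_bound:
  fixes q e :: "real \<Rightarrow> real"
  assumes q: "(q \<longlongrightarrow> d) (at_right 0)" and e: "(e \<longlongrightarrow> 0) (at_right 0)"
    and bound: "\<forall>\<^sub>F t in at_right 0. 0 \<le> q t \<and> q t \<le> e t + a * sqrt (q t)" and "0 \<le> a"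
  shows "d \<le> a\<^sup>2"
proof -
  have "0 \<le> d"
    by (rule tendsto_lowerbound[OF q]) (use bound in \<open>auto elim: eventually_mono\<close>)
  have bound_tendsto: "((\<lambda>t. e t + a * sqrt (q t)) \<longlongrightarrow> 0 + a * sqrt d) (at_right 0)"
    by (intro tendsto_intros q e)
  have "d \<le> 0 + a * sqrt d"
    by (rule tendsto_le[OF _ bound_tendsto q]) (use bound in \<open>auto elim: eventually_mono\<close>)
  then have "sqrt d * sqrt d \<le> a * sqrt d"
    using \<open>0 \<le> d\<close> by simp
  have "sqrt d \<le> a"
  proof (cases "d = 0")
    case False
    then have "0 < sqrt d"
      using \<open>0 \<le> d\<close> by simp
    with \<open>sqrt d * sqrt d \<le> a * sqrt d\<close> show ?thesis
      by (rule mult_right_le_imp_le)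
  qed (simp add: \<open>0 \<le> a\<close>)
  then show ?thesis
    using \<open>0 \<le> d\<close> by (metis power_mono real_sqrt_ge_zero real_sqrt_pow2)
qed

text \<open>Write \<open>u = (u \<bullet> n) n + w\<close> with \<open>n\<close> the outer unit normal at \<open>y\<close>. By the two variational
  inequalities the increment \<open>\<Delta>\<close> of the projection satisfies \<open>n \<bullet> \<Delta> = O(t\<^sup>2)\<close> and
  \<open>norm \<Delta> \<le> t \<surd>q\<close>, so \<open>t q = u \<bullet> \<Delta> \<le> O(t\<^sup>2) + norm w \<cdot> t \<surd>q\<close>.\<close>

lemma closest_point_difference_quotient_bound:
  fixes S :: "'a::euclidean_space set" and y u :: 'a
  assumes S: "convex S" "closed S" "S \<noteq> {}" and u: "norm u = 1" and "y \<notin> S" and "t > 0"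
  defines "q \<equiv> (closest_point S (y + t *\<^sub>R u) \<bullet> u - closest_point S y \<bullet> u) / t"
    and "n \<equiv> (y - closest_point S y) /\<^sub>R norm (y - closest_point S y)"
  shows "q \<le> t / norm (y - closest_point S y) + sqrt (1 - (u \<bullet> n)\<^sup>2) * sqrt q"
proof -
  define v where "v = y - closest_point S y"
  define \<Delta> where "\<Delta> = closest_point S (y + t *\<^sub>R u) - closest_point S y"
  define w where "w = u - (u \<bullet> n) *\<^sub>R n"
  have "v \<noteq> 0"
    using \<open>y \<notin> S\<close> closest_point_in_set[OF S(2,3), of y] by (auto simp: v_def)
  then have n: "norm n = 1" "n \<bullet> \<Delta> = (v \<bullet> \<Delta>) / norm v"
    by (simp_all add: n_def v_def[symmetric] divide_inverse_commute)
  have "u \<bullet> \<Delta> = t * q"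
    using \<open>t > 0\<close> by (simp add: q_def \<Delta>_def inner_diff_right inner_commute)
  then have normal: "\<bar>v \<bullet> \<Delta>\<bar> \<le> t * (t * q)" and firm: "(norm \<Delta>)\<^sup>2 \<le> t * (t * q)"
    using closest_point_increment_bounds[OF S, of y "t *\<^sub>R u"] by (simp_all add: v_def \<Delta>_def)
  have "0 \<le> q"
    using order_trans[OF zero_le_power2 firm] \<open>t > 0\<close> by (simp add: zero_le_mult_iff)
  have "norm \<Delta> \<le> t"
    using closest_point_lipschitz[OF S, of "y + t *\<^sub>R u" y] u \<open>t > 0\<close> by (simp add: \<Delta>_def dist_norm)
  moreover have "u \<bullet> \<Delta> \<le> norm \<Delta>"
    using norm_cauchy_schwarz[of u \<Delta>] u by simp
  ultimately have "t * q \<le> t"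
    using \<open>u \<bullet> \<Delta> = t * q\<close> by linarith
  then have "\<bar>v \<bullet> \<Delta>\<bar> \<le> t * t"
    using normal mult_left_mono[of "t * q" t t] \<open>t > 0\<close> by linarith
  then have "\<bar>n \<bullet> \<Delta>\<bar> \<le> t * t / norm v"
    using n(2) by (simp add: abs_div divide_right_mono)
  moreover have "\<bar>u \<bullet> n\<bar> \<le> 1"
    using Cauchy_Schwarz_ineq2[of u n] u n(1) by simp
  ultimately have "\<bar>(u \<bullet> n) * (n \<bullet> \<Delta>)\<bar> \<le> 1 * (t * t / norm v)"
    unfolding abs_mult by (intro mult_mono) auto
  have "(t * sqrt q)\<^sup>2 = t * (t * q)"
    using \<open>0 \<le> q\<close> by (simp add: power_mult_distrib power2_eq_square[of t])
  with firm have "(norm \<Delta>)\<^sup>2 \<le> (t * sqrt q)\<^sup>2"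
    by simp
  then have "norm \<Delta> \<le> t * sqrt q"
    by (rule power2_le_imp_le) (use \<open>0 \<le> q\<close> \<open>t > 0\<close> in simp)
  then have "w \<bullet> \<Delta> \<le> norm w * (t * sqrt q)"
    using norm_cauchy_schwarz[of w \<Delta>] mult_left_mono[of "norm \<Delta>" "t * sqrt q" "norm w"] by simp
  moreover have "norm w = sqrt (1 - (u \<bullet> n)\<^sup>2)"
    using power2_norm_diff_projection[OF n(1), of u] u by (simp add: w_def real_sqrt_unique)
  moreover have "t * q = (u \<bullet> n) * (n \<bullet> \<Delta>) + w \<bullet> \<Delta>"
    by (simp add: \<open>u \<bullet> \<Delta> = t * q\<close>[symmetric] w_def inner_diff_left)
  ultimately have "t * q \<le> t * (t / norm v + sqrt (1 - (u \<bullet> n)\<^sup>2) * sqrt q)"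
    using \<open>\<bar>(u \<bullet> n) * (n \<bullet> \<Delta>)\<bar> \<le> 1 * (t * t / norm v)\<close> by (simp add: algebra_simps)
  then show ?thesis
    using \<open>t > 0\<close> by (simp add: v_def)
qed

lemma closest_point_derivative_along_le:
  fixes S :: "'a::euclidean_space set" and y u :: 'a
  assumes S: "convex S" "closed S" "S \<noteq> {}" and u: "norm u = 1" and "y \<notin> S"
    and deriv: "((\<lambda>t. closest_point S (y + t *\<^sub>R u) \<bullet> u) has_real_derivative d) (at 0)"
  shows "d \<le> 1 - (((y - closest_point S y) \<bullet> u) / norm (y - closest_point S y))\<^sup>2"
proof -
  define n where "n = (y - closest_point S y) /\<^sub>R norm (y - closest_point S y)"
  define q where "q t = (closest_point S (y + t *\<^sub>R u) \<bullet> u - closest_point S y \<bullet> u) / t" for t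
  have "y \<noteq> closest_point S y"
    using \<open>y \<notin> S\<close> closest_point_in_set[OF S(2,3), of y] by auto
  then have "norm n = 1"
    by (simp add: n_def)
  then have "\<bar>u \<bullet> n\<bar> \<le> 1"
    using Cauchy_Schwarz_ineq2[of u n] u by simp
  then have "0 \<le> 1 - (u \<bullet> n)\<^sup>2"
    by (simp add: abs_square_le_1)
  have "(q \<longlongrightarrow> d) (at 0)"
    using deriv unfolding DERIV_def q_def by simp
  then have "(q \<longlongrightarrow> d) (at_right 0)"
    by (simp add: filterlim_at_split)
  moreover have "((\<lambda>t. t / norm (y - closest_point S y)) \<longlongrightarrow> 0) (at_right 0)"
    by (intro tendsto_divide_zero tendsto_ident_at)
  moreover have "\<forall>\<^sub>F t in at_right 0. 0 \<le> q t \<and>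
      q t \<le> t / norm (y - closest_point S y) + sqrt (1 - (u \<bullet> n)\<^sup>2) * sqrt (q t)"
    unfolding eventually_at_right_field
  proof (intro exI[of _ 1] conjI allI impI)
    fix t :: real
    assume "0 < t"
    then show "0 \<le> q t"
      using mono_closest_point_along[OF S, of y u, THEN monoD, of 0 t] by (simp add: q_def)
    show "q t \<le> t / norm (y - closest_point S y) + sqrt (1 - (u \<bullet> n)\<^sup>2) * sqrt (q t)"
      using closest_point_difference_quotient_bound[OF S u \<open>y \<notin> S\<close> \<open>0 < t\<close>] by (simp add: q_def n_def)
  qed simp
  ultimately have "d \<le> (sqrt (1 - (u \<bullet> n)\<^sup>2))\<^sup>2"
    by (rule le_power2_if_le_sqrt_bound) (use \<open>0 \<le> 1 - (u \<bullet> n)\<^sup>2\<close> in simp)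
  with \<open>0 \<le> 1 - (u \<bullet> n)\<^sup>2\<close> show ?thesis
    by (simp add: n_def inner_commute divide_inverse_commute)
qed

lemma fmap_eq_diff_nearest:
  assumes "x \<in> nbhd A eps" and "x \<notin> closure A"
  shows "fmap A eps x = x - nearest A x"
  using assms by (simp add: fmap_def)

lemma has_real_derivative_fmap_along:
  fixes A :: "'a::euclidean_space set" and y u :: 'a
  assumes y: "y \<in> interior (nbhd A eps) - closure A" and u: "norm u = 1"
    and deriv: "((\<lambda>t. nearest A (y + t *\<^sub>R u) \<bullet> u) has_real_derivative d) (at 0)"
  shows "((\<lambda>t. fmap A eps (y + t *\<^sub>R u) \<bullet> u) has_real_derivative 1 - d) (at 0)"
proof -
  define T where "T = (\<lambda>t::real. y + t *\<^sub>R u) -` (interior (nbhd A eps) - closure A)"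
  have "open T"
    unfolding T_def by (intro continuous_open_vimage open_Diff) (auto intro!: continuous_intros)
  have "((\<lambda>t. y \<bullet> u + t - nearest A (y + t *\<^sub>R u) \<bullet> u) has_real_derivative 1 - d) (at 0)"
    using deriv by (auto intro!: derivative_eq_intros)
  moreover have "0 \<in> T"
    using y by (simp add: T_def)
  moreover have "y \<bullet> u + t - nearest A (y + t *\<^sub>R u) \<bullet> u = fmap A eps (y + t *\<^sub>R u) \<bullet> u"
    if "t \<in> T" for t
    using that interior_subset[of "nbhd A eps"] u
    by (auto simp: T_def fmap_eq_diff_nearest inner_diff_left inner_add_left dot_square_norm)
  ultimately show ?thesis
    using \<open>open T\<close> by (blast intro: has_field_derivative_transform_within_open)
qed

lemma AE_differentiable_closest_point_along_Basis:
  fixes S :: "'a::euclidean_space set" and i :: 'a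
  assumes S: "convex S" "closed S" "S \<noteq> {}" and "i \<in> Basis"
  shows "AE y in lebesgue.
    \<exists>d. ((\<lambda>s. closest_point S (y + s *\<^sub>R i) \<bullet> i) has_real_derivative d) (at 0)"
proof (rule AE_differentiable_along_Basis[OF _ \<open>i \<in> Basis\<close>])
  show "continuous_on UNIV (\<lambda>y. closest_point S y \<bullet> i)"
    by (intro continuous_intros continuous_on_closest_point[OF S])
  have "norm i = 1"
    using \<open>i \<in> Basis\<close> by simp
  then show "\<exists>N. negligible N \<and>
      (\<forall>s. s \<notin> N \<longrightarrow> (\<exists>D. ((\<lambda>s. closest_point S (x + s *\<^sub>R i) \<bullet> i) has_real_derivative D) (at s)))"
    for x
    using differentiable_ae_if_mono_and_mono_diff[OF mono_closest_point_along[OF S]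
        mono_diff_closest_point_along[OF S]] by metis
qed

theorem lemma2p4:
  fixes A :: "'a::euclidean_space set" and eps :: real and i :: 'a
  assumes "A \<noteq> {}" and "convex A" and "eps > 0" and "i \<in> Basis"
  shows "AE x in lebesgue.
           x \<in> interior (nbhd A eps) - closure A \<longrightarrow>
           (\<exists>D. ((\<lambda>t. fmap A eps (x + t *\<^sub>R i) \<bullet> i) has_real_derivative D) (at 0) \<and>
                D \<ge> (((x - nearest A x) \<bullet> i) / norm (x - nearest A x))\<^sup>2)"
proof -
  have C: "convex (closure A)" "closed (closure A)" "closure A \<noteq> {}"
    using assms by (simp_all add: convex_closure)
  have i: "norm i = 1"
    using \<open>i \<in> Basis\<close> by simp
  have "AE y in lebesgue. \<exists>d. ((\<lambda>s. nearest A (y + s *\<^sub>R i) \<bullet> i) has_real_derivative d) (at 0)"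
    using AE_differentiable_closest_point_along_Basis[OF C \<open>i \<in> Basis\<close>] by (simp add: nearest_def)
  then show ?thesis
  proof (rule eventually_mono, intro impI)
    fix y
    assume "\<exists>d. ((\<lambda>s. nearest A (y + s *\<^sub>R i) \<bullet> i) has_real_derivative d) (at 0)"
      and y: "y \<in> interior (nbhd A eps) - closure A"
    then obtain d where d: "((\<lambda>s. nearest A (y + s *\<^sub>R i) \<bullet> i) has_real_derivative d) (at 0)"
      by blast
    have "d \<le> 1 - (((y - nearest A y) \<bullet> i) / norm (y - nearest A y))\<^sup>2"
      using closest_point_derivative_along_le[OF C i, of y d] d y by (simp add: nearest_def)
    with has_real_derivative_fmap_along[OF y i d]
    show "\<exists>D. ((\<lambda>t. fmap A eps (y + t *\<^sub>R i) \<bullet> i) has_real_derivative D) (at 0) \<and>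
        D \<ge> (((y - nearest A y) \<bullet> i) / norm (y - nearest A y))\<^sup>2"
      by auto
  qed
qed

end
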